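(* Let $N=\{1,\dots,n\}$, let $U$ be a finite set, $S_1,\dots,S_n\subseteq U$, $w:U\to\mathbb{R}$, $c\in\mathbb{R}$, and let $s:2^N\to\mathbb{R}$ be defined by $s_A=c+\mathbf{w}(\bigcup_{i\in A}S_i)$, where $\mathbf{w}(S)=\sum_{u\in S}w(u)$. Define the type-4 discrete set Fourier transform of $s$ by $\widehat{s}^{(4)}_B=\sum_{A\subseteq N,\,A\cup B=N}(-1)^{|A\cap B|}s_A$ for $B\subseteq N$. Then $$\widehat{s}^{(4)}_B=\begin{cases}-\mathbf{w}\Big(\bigcap_{i\in B}S_i\setminus\bigcup_{i\notin B}S_i\Big), & B\neq\emptyset,\\ s_N, & B=\emptyset.\end{cases}$$ *)

theory Defs
  imports Complex_Main
begin

definition wt :: "('a \<Rightarrow> real) \<Rightarrow> 'a set \<Rightarrow> real" where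
  "wt w S = (\<Sum>u\<in>S. w u)"

definition fourier4 :: "'b set \<Rightarrow> ('b set \<Rightarrow> real) \<Rightarrow> 'b set \<Rightarrow> real" where
  "fourier4 N s B = (\<Sum>A\<in>{A. A \<subseteq> N \<and> A \<union> B = N}. (-1) ^ card (A \<inter> B) * s A)"

end

theory Submission
  imports Defs
begin

text \<open>
  For B \<subseteq> N the sets A \<subseteq> N with A \<union> B = N are exactly (N - B) \<union> C for C \<subseteq> B, so the
  transform is an alternating sum over the subsets of B and is linear in s. Writing the
  covered weight as w(U) minus the weight of the uncovered points reduces the theorem to
  one point u at a time: the set function "A misses T" (T the indices of the sets
  containing u) has transform "N \<inter> T = B", because the alternating sum over the subsets
  of B - T vanishes unless B \<subseteq> T.
\<close>

lemma sum_Pow_minus_one_power_card: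
  assumes "finite B"
  shows "(\<Sum>C\<in>Pow B. (-1::'a::ring_1) ^ card C) = of_bool (B = {})"
proof (cases "B = {}")
  case False
  then have "{} \<subset> B" by blast
  then show ?thesis
    using sum_alternating_cancels[of "Pow B" card] card_subsupersets_even_odd[OF assms, of "{}"]
      assms False by (simp add: Pow_def)
qed simp

lemma fourier4_cong:
  assumes "\<And>A. A \<subseteq> N \<Longrightarrow> s A = t A"
  shows "fourier4 N s B = fourier4 N t B"
  unfolding fourier4_def using assms by (intro sum.cong) auto

lemma fourier4_add: "fourier4 N (\<lambda>A. f A + g A) B = fourier4 N f B + fourier4 N g B"
  by (simp add: fourier4_def distrib_left sum.distrib)

lemma fourier4_diff: "fourier4 N (\<lambda>A. f A - g A) B = fourier4 N f B - fourier4 N g B"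
  by (simp add: fourier4_def right_diff_distrib sum_subtractf)

lemma fourier4_cmult: "fourier4 N (\<lambda>A. a * f A) B = a * fourier4 N f B"
  by (simp add: fourier4_def sum_distrib_left mult.left_commute)

lemma fourier4_sum: "fourier4 N (\<lambda>A. \<Sum>u\<in>U. f u A) B = (\<Sum>u\<in>U. fourier4 N (f u) B)"
  by (simp add: fourier4_def sum_distrib_left sum.swap[of _ U])

lemma fourier4_empty: "fourier4 N s {} = s N"
proof -
  have "{A. A \<subseteq> N \<and> A \<union> {} = N} = {N}" by auto
  then show ?thesis by (simp add: fourier4_def)
qed

lemma fourier4_eq_sum_Pow:
  assumes "B \<subseteq> N"
  shows "fourier4 N s B = (\<Sum>C\<in>Pow B. (-1) ^ card C * s ((N - B) \<union> C))"
proof -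
  have inj: "inj_on (\<lambda>C. (N - B) \<union> C) (Pow B)"
    by (auto simp: inj_on_def)
  have "{A. A \<subseteq> N \<and> A \<union> B = N} = (\<lambda>C. (N - B) \<union> C) ` Pow B"
  proof (intro equalityI subsetI)
    fix A assume "A \<in> {A. A \<subseteq> N \<and> A \<union> B = N}"
    then have "A = (N - B) \<union> (A \<inter> B)" by auto
    then show "A \<in> (\<lambda>C. (N - B) \<union> C) ` Pow B" by blast
  qed (use assms in auto)
  moreover have "((N - B) \<union> C) \<inter> B = C" if "C \<in> Pow B" for C
    using that by auto
  ultimately show ?thesis
    unfolding fourier4_def by (simp add: sum.reindex[OF inj])
qed

lemma fourier4_of_bool_disjoint:
  assumes "finite N" "B \<subseteq> N"
  shows "fourier4 N (\<lambda>A. of_bool (A \<inter> T = {})) B = of_bool (N \<inter> T = B)"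
proof (cases "(N - B) \<inter> T = {}")
  case True
  have "fourier4 N (\<lambda>A. of_bool (A \<inter> T = {})) B
      = (\<Sum>C\<in>Pow B. (-1) ^ card C * of_bool (C \<inter> T = {}))"
    using True by (simp add: fourier4_eq_sum_Pow[OF assms(2)] Int_Un_distrib2)
  also have "\<dots> = (\<Sum>C\<in>Pow B \<inter> {C. C \<inter> T = {}}. (-1) ^ card C)"
    using finite_subset[OF assms(2,1)] by simp
  also have "Pow B \<inter> {C. C \<inter> T = {}} = Pow (B - T)"
    by auto
  also have "(\<Sum>C\<in>Pow (B - T). (-1) ^ card C) = (of_bool (B - T = {}) :: real)"
    using assms finite_subset by (intro sum_Pow_minus_one_power_card) blast
  also have "B - T = {} \<longleftrightarrow> N \<inter> T = B"
    using True assms(2) by blast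
  finally show ?thesis .
next
  case False
  then have "((N - B) \<union> C) \<inter> T \<noteq> {}" for C
    by blast
  moreover have "N \<inter> T \<noteq> B"
    using False by blast
  ultimately show ?thesis
    by (simp add: fourier4_eq_sum_Pow[OF assms(2)])
qed

lemma fourier4_const:
  assumes "finite N" "B \<subseteq> N"
  shows "fourier4 N (\<lambda>_. a) B = (if B = {} then a else 0)"
  using fourier4_cmult[of N a "\<lambda>_. 1" B] fourier4_of_bool_disjoint[OF assms, of "{}"]
  by auto

lemma wt_UN_eq_wt_diff_uncovered:
  assumes "finite U" "(\<Union>i\<in>A. S i) \<subseteq> U"
  shows "wt w (\<Union>i\<in>A. S i) = wt w U - (\<Sum>u\<in>U. w u * of_bool (A \<inter> {i. u \<in> S i} = {}))"
proof -
  have "(\<Sum>u\<in>U. w u * of_bool (A \<inter> {i. u \<in> S i} = {})) = wt w (U \<inter> {u. A \<inter> {i. u \<in> S i} = {}})"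
    using assms(1) by (simp add: wt_def)
  also have "U \<inter> {u. A \<inter> {i. u \<in> S i} = {}} = U - (\<Union>i\<in>A. S i)"
    by auto
  also have "wt w (U - (\<Union>i\<in>A. S i)) = wt w U - wt w (\<Union>i\<in>A. S i)"
    unfolding wt_def using assms by (simp add: sum_diff)
  finally show ?thesis by simp
qed

lemma fourier4_wt_UN:
  assumes "finite N" "finite U" "\<And>i. i \<in> N \<Longrightarrow> S i \<subseteq> U" "B \<subseteq> N" "B \<noteq> {}"
  shows "fourier4 N (\<lambda>A. wt w (\<Union>i\<in>A. S i)) B = - wt w ((\<Inter>i\<in>B. S i) - (\<Union>i\<in>N - B. S i))"
proof -
  have "fourier4 N (\<lambda>A. wt w (\<Union>i\<in>A. S i)) B
      = fourier4 N (\<lambda>A. wt w U - (\<Sum>u\<in>U. w u * of_bool (A \<inter> {i. u \<in> S i} = {}))) B"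
    using assms(3) by (intro fourier4_cong wt_UN_eq_wt_diff_uncovered[OF assms(2)]) blast
  also have "\<dots> = - (\<Sum>u\<in>U. w u * of_bool (N \<inter> {i. u \<in> S i} = B))"
    using assms by (simp add: fourier4_diff fourier4_const fourier4_sum fourier4_cmult
        fourier4_of_bool_disjoint del: sum_mult_of_bool_eq)
  also have "\<dots> = - wt w (U \<inter> {u. N \<inter> {i. u \<in> S i} = B})"
    using assms(2) by (simp add: wt_def)
  also have "U \<inter> {u. N \<inter> {i. u \<in> S i} = B} = (\<Inter>i\<in>B. S i) - (\<Union>i\<in>N - B. S i)"
    using assms(3-5) by blast
  finally show ?thesis .
qed

theorem theorem3:
  fixes n :: nat and U :: "'a set" and S :: "nat \<Rightarrow> 'a set"
    and w :: "'a \<Rightarrow> real" and c :: real and s :: "nat set \<Rightarrow> real" and B :: "nat set"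
  assumes "finite U"
    and "\<And>i. i \<in> {1..n} \<Longrightarrow> S i \<subseteq> U"
    and "\<And>A. A \<subseteq> {1..n} \<Longrightarrow> s A = c + wt w (\<Union>i\<in>A. S i)"
    and "B \<subseteq> {1..n}"
  shows "fourier4 {1..n} s B =
           (if B \<noteq> {} then - wt w ((\<Inter>i\<in>B. S i) - (\<Union>i\<in>{1..n} - B. S i))
            else s {1..n})"
proof (cases "B = {}")
  case True
  then show ?thesis by (simp add: fourier4_empty)
next
  case False
  have "fourier4 {1..n} s B = fourier4 {1..n} (\<lambda>A. c + wt w (\<Union>i\<in>A. S i)) B"
    using assms(3) by (rule fourier4_cong)
  also have "\<dots> = fourier4 {1..n} (\<lambda>A. wt w (\<Union>i\<in>A. S i)) B"
    using assms(4) False by (simp add: fourier4_add fourier4_const)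
  also have "\<dots> = - wt w ((\<Inter>i\<in>B. S i) - (\<Union>i\<in>{1..n} - B. S i))"
    using fourier4_wt_UN[OF _ assms(1,2,4) False] by simp
  finally show ?thesis
    using False by simp
qed

end
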